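(* For every $n \in \mathbb{N}$ and all integers $h, t$ with $0 \le h \le 4$ and $1 \le t \le F_n$: (i) $a_{5(F_{n+1}-1)+hF_n+t+1} = 5F_{n+2} - 4 + hF_{n+1} + \lfloor (F_{n+1}+1+t)\varphi \rfloor - \lfloor (F_{n+1}+1)\varphi \rfloor$; (ii) $b_{5(F_{n+1}-1)+hF_n+t+1} = 5F_{n+3} + hF_{n+2} - 3 + t + \lfloor (F_{n+1}+1+t)\varphi \rfloor - \lfloor (F_{n+1}+1)\varphi \rfloor$, where $\varphi = \frac{1+\sqrt{5}}{2}$.
   Context: Fibonacci numbers: $F_1 = F_2 = 1$, $F_{i+2} = F_{i+1} + F_i$. Let $\sigma$ be the substitution on finite sequences over $\{1,2\}$ replacing each entry $1$ by $2$ and each entry $2$ by $2,1$. Let $C_{1,1} = (1)$, $C_{i+1,1} = \sigma(C_{i,1})$. For $i \in \mathbb{N}$ let $C_i$ be the concatenation of five copies of $C_{i,1}$. Let $(c_n)_{n \in \mathbb{N}}$ be the infinite sequence obtained by concatenating $C_1, C_2, C_3, \dots$ in order, and let $d_n = c_n + 1$. Define $a_1 = 6$, $a_n = 6 + \sum_{i=1}^{n-1} c_i$, and $b_1 = 12$, $b_n = 12 + \sum_{i=1}^{n-1} d_i$ for $n \in \mathbb{N}$. *)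

theory Defs
  imports Complex_Main "HOL-Number_Theory.Fib"
begin

text \<open>Fibonacci numbers: the library fib has fib 1 = fib 2 = 1, matching F_1 = F_2 = 1.\<close>

definition sigma :: "nat list \<Rightarrow> nat list" where
  "sigma xs = concat (map (\<lambda>x. if x = 1 then [2] else [2, 1]) xs)"

definition Cone :: "nat \<Rightarrow> nat list" where
  "Cone i = (sigma ^^ (i - 1)) [1]"

definition Cblk :: "nat \<Rightarrow> nat list" where
  "Cblk i = concat (replicate 5 (Cone i))"

text \<open>c_n (1-indexed): n-th entry of C_1 C_2 C_3 ...; the prefix C_1 ... C_n has length >= n.\<close>
definition cseq :: "nat \<Rightarrow> nat" where
  "cseq n = (concat (map Cblk [1..<n+1])) ! (n - 1)"

definition dseq :: "nat \<Rightarrow> nat" where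
  "dseq n = cseq n + 1"

definition aseq :: "nat \<Rightarrow> int" where
  "aseq n = 6 + (\<Sum>i\<in>{1..<n}. int (cseq i))"

definition bseq :: "nat \<Rightarrow> int" where
  "bseq n = 12 + (\<Sum>i\<in>{1..<n}. int (dseq i))"

definition phi :: real where
  "phi = (1 + sqrt 5) / 2"

end

(* The word C_{i,1} is the Fibonacci word over {1,2}: a prefix of the fixed point
   2 1 2 2 1 2 1 2 ... of sigma, with C_{i+2,1} = C_{i+1,1} C_{i,1}.  The prefix of length t of
   that fixed point sums to floor((t+1) phi) - 1, and sigma preserves this property because of the
   Beatty identities floor(floor(m phi) phi) = floor(m phi) + m - 1 and
   floor((floor(m phi) + 1) phi) = floor(m phi) + m + 1, consequences of phi^2 = phi + 1 and the
   irrationality of phi.  Since C_{n,1} follows C_{n+1,1}, of length F_{n+1}, inside C_{n+2,1},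
   a prefix of length t of C_{n,1} sums to floor((F_{n+1}+1+t) phi) - floor((F_{n+1}+1) phi).
   The index 5(F_{n+1} - 1) + h F_n + t points into C_n after h full copies of C_{n,1}, and the
   lengths and sums of C_1 ... C_{n-1} are multiples of Fibonacci numbers; b_m - a_m = m + 5. *)

theory Submission
  imports Defs "HOL-Computational_Algebra.Nth_Powers"
begin

lemma sqrt_5_not_rat: "sqrt 5 \<notin> \<rat>"
proof
  assume "sqrt 5 \<in> \<rat>"
  then obtain p q :: nat where "q \<noteq> 0" and "\<bar>sqrt 5\<bar> = real p / real q"
    by (rule Rats_abs_nat_div_natE)
  then have "real p = real q * sqrt 5"
    by (simp add: field_simps)
  then have "real (p ^ 2) = real (5 * q ^ 2)"
    by (simp add: power_mult_distrib)
  then have "is_nth_power 2 (5 * q ^ 2)"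
    by (metis of_nat_eq_iff is_nth_power_nth_power)
  with \<open>q \<noteq> 0\<close> have "is_nth_power 2 (5::nat)"
    by (simp add: is_nth_power_mult_cancel_right)
  then show False
    using is_nth_power_prime_power_nat_iff[of 5 2 1] by simp
qed

lemma phi_not_rat: "phi \<notin> \<rat>"
proof
  assume "phi \<in> \<rat>"
  then have "2 * phi - 1 \<in> \<rat>"
    by simp
  moreover have "2 * phi - 1 = sqrt 5"
    by (simp add: phi_def add_divide_distrib)
  ultimately show False
    using sqrt_5_not_rat by simp
qed

lemma phi_squared: "phi * phi = phi + 1"
  by (simp add: phi_def field_simps)

lemma one_less_phi: "1 < phi"
  by (simp add: phi_def)

lemma phi_less_2: "phi < 2"
proof -
  have "sqrt 5 < 3"
    by (rule real_less_lsqrt) auto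
  then show ?thesis
    by (simp add: phi_def)
qed

lemma of_nat_mult_phi_not_int: "0 < n \<Longrightarrow> real n * phi \<notin> \<int>"
proof
  assume "0 < n" and "real n * phi \<in> \<int>"
  then have "real n * phi / real n \<in> \<rat>"
    by (intro Rats_divide) (auto simp: Ints_subset_Rats[THEN subsetD])
  with \<open>0 < n\<close> show False
    using phi_not_rat by simp
qed

lemma mult_phi_minus_1_less_1: "x \<le> 1 \<Longrightarrow> x * (phi - 1) < 1"
  using one_less_phi phi_less_2 mult_left_le_one_le[of "phi - 1" x] mult_nonpos_nonneg[of x "phi - 1"]
  by linarith

definition wythoff :: "nat \<Rightarrow> nat" where
  "wythoff n = nat \<lfloor>real n * phi\<rfloor>"

lemma of_nat_wythoff: "int (wythoff n) = \<lfloor>real n * phi\<rfloor>"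
  using one_less_phi by (simp add: wythoff_def)

lemma wythoff_mult_phi:
  "real (wythoff n) * phi = real (wythoff n + n) - frac (real n * phi) * (phi - 1)"
proof -
  have w: "real (wythoff n) = real n * phi - frac (real n * phi)"
    using of_nat_wythoff[of n] by (simp add: frac_def)
  have "real (wythoff n) * phi = real n * (phi * phi) - frac (real n * phi) * phi"
    unfolding w by (simp add: algebra_simps)
  also have "\<dots> = real (wythoff n + n) - frac (real n * phi) * (phi - 1)"
    by (simp add: phi_squared w algebra_simps)
  finally show ?thesis .
qed

lemma wythoff_wythoff:
  assumes "0 < n"
  shows "wythoff (wythoff n) + 1 = wythoff n + n"
proof -
  define f where "f = frac (real n * phi)"
  have "0 < f"
    using of_nat_mult_phi_not_int[OF assms] by (simp add: f_def frac_gt_0_iff)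
  moreover have "f < 1"
    by (simp add: f_def frac_lt_1)
  ultimately have "0 < f * (phi - 1)" "f * (phi - 1) < 1"
    using one_less_phi mult_phi_minus_1_less_1 by simp_all
  then have "\<lfloor>real (wythoff n) * phi\<rfloor> = int (wythoff n + n) - 1"
    unfolding wythoff_mult_phi f_def[symmetric] by (intro floor_unique) auto
  then show ?thesis
    using assms of_nat_wythoff[of "wythoff n"] by linarith
qed

lemma wythoff_Suc_wythoff: "wythoff (Suc (wythoff n)) = wythoff n + n + 1"
proof -
  define f where "f = frac (real n * phi)"
  have "0 \<le> f" "f < 1"
    by (simp_all add: f_def frac_lt_1)
  then have "0 \<le> (1 - f) * (phi - 1)" "(1 - f) * (phi - 1) < 1"
    using one_less_phi mult_phi_minus_1_less_1 by simp_all
  moreover have "real (Suc (wythoff n)) * phi = real (wythoff n + n + 1) + (1 - f) * (phi - 1)"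
    using wythoff_mult_phi[of n] by (simp add: f_def algebra_simps)
  ultimately have "\<lfloor>real (Suc (wythoff n)) * phi\<rfloor> = int (wythoff n + n + 1)"
    by (intro floor_unique) auto
  then show ?thesis
    using of_nat_wythoff[of "Suc (wythoff n)"] by linarith
qed

lemma sigma_Nil [simp]: "sigma [] = []"
  by (simp add: sigma_def)

lemma sigma_append [simp]: "sigma (xs @ ys) = sigma xs @ sigma ys"
  by (simp add: sigma_def)

lemma sigma_Cons [simp]: "sigma (x # xs) = (if x = 1 then [2] else [2, 1]) @ sigma xs"
  by (simp add: sigma_def)

lemma set_sigma: "set (sigma xs) \<subseteq> {1, 2}"
  by (induction xs) auto

lemma length_sigma: "set xs \<subseteq> {1, 2} \<Longrightarrow> length (sigma xs) = sum_list xs"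
  by (induction xs) auto

lemma sum_list_sigma: "sum_list (sigma xs) = length xs + length (sigma xs)"
  by (induction xs) auto

lemma take_sigma:
  assumes "set xs \<subseteq> {1, 2}" and "t \<le> length (sigma xs)"
  shows "\<exists>k \<le> length xs. take t (sigma xs) = sigma (take k xs)
           \<or> k < length xs \<and> take t (sigma xs) = sigma (take k xs) @ [2]"
  using assms
proof (induction xs arbitrary: t)
  case Nil
  then show ?case by simp
next
  case (Cons x xs)
  consider "t = 0" | "x = 2" "t = 1" | t' where "t = length (sigma [x]) + t'"
    using Cons.prems(1) by (cases t; cases "t - 1") auto
  then show ?case
  proof cases
    case 1
    then show ?thesis by (intro exI[of _ 0]) simp
  next
    case 2
    then show ?thesis by (intro exI[of _ 0]) simp
  next
    case 3
    then have "set xs \<subseteq> {1, 2}" "t' \<le> length (sigma xs)"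
      using Cons.prems by auto
    then obtain k where "k \<le> length xs" and
      "take t' (sigma xs) = sigma (take k xs)
       \<or> k < length xs \<and> take t' (sigma xs) = sigma (take k xs) @ [2]"
      using Cons.IH by blast
    moreover have "take t (sigma (x # xs)) = sigma [x] @ take t' (sigma xs)"
      by (simp add: 3)
    moreover have "sigma (take (Suc k) (x # xs)) = sigma [x] @ sigma (take k xs)"
      by simp
    ultimately show ?thesis
      by (intro exI[of _ "Suc k"]) auto
  qed
qed

text \<open>This characterises the prefixes of the fixed point \<open>2 1 2 2 1 2 1 2 \<dots>\<close> of \<^const>\<open>sigma\<close>.\<close>

definition wythoff_prefix_sums :: "nat list \<Rightarrow> bool" where
  "wythoff_prefix_sums xs \<longleftrightarrow> (\<forall>t \<le> length xs. sum_list (take t xs) + 1 = wythoff (t + 1))"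

lemma wythoff_prefix_sums_sigma:
  assumes xs: "set xs \<subseteq> {1, 2}" and "wythoff_prefix_sums xs"
  shows "wythoff_prefix_sums (sigma xs)"
  unfolding wythoff_prefix_sums_def
proof (intro allI impI)
  fix t
  assume t: "t \<le> length (sigma xs)"
  then obtain k where "k \<le> length xs" and
    k: "take t (sigma xs) = sigma (take k xs)
        \<or> k < length xs \<and> take t (sigma xs) = sigma (take k xs) @ [2]"
    using take_sigma[OF xs] by blast
  define s where "s = sum_list (take k xs)"
  have "set (take k xs) \<subseteq> {1, 2}"
    using xs set_take_subset by fastforce
  then have len: "length (sigma (take k xs)) = s" and sum: "sum_list (sigma (take k xs)) = k + s"
    using \<open>k \<le> length xs\<close> by (simp_all add: s_def length_sigma sum_list_sigma)
  have "s + 1 = wythoff (Suc k)"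
    using assms(2) \<open>k \<le> length xs\<close> by (simp add: wythoff_prefix_sums_def s_def)
  have "length (take t (sigma xs)) = t"
    using t by simp
  from k show "sum_list (take t (sigma xs)) + 1 = wythoff (t + 1)"
  proof
    assume eq: "take t (sigma xs) = sigma (take k xs)"
    then have "t + 1 = wythoff (Suc k)"
      using \<open>length (take t (sigma xs)) = t\<close> len \<open>s + 1 = _\<close> by simp
    then show ?thesis
      using wythoff_wythoff[of "Suc k"] eq sum \<open>s + 1 = _\<close> by simp
  next
    assume "k < length xs \<and> take t (sigma xs) = sigma (take k xs) @ [2]"
    then have eq: "take t (sigma xs) = sigma (take k xs) @ [2]" ..
    then have "t = wythoff (Suc k)"
      using \<open>length (take t (sigma xs)) = t\<close> len \<open>s + 1 = _\<close> by simp
    then show ?thesis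
      using wythoff_Suc_wythoff[of "Suc k"] eq sum \<open>s + 1 = _\<close> by simp
  qed
qed

lemma Cone_Suc: "0 < n \<Longrightarrow> Cone (Suc n) = sigma (Cone n)"
  by (cases n) (simp_all add: Cone_def)

lemma set_Cone: "set (Cone n) \<subseteq> {1, 2}"
proof (cases "n \<le> 1")
  case True
  then show ?thesis by (simp add: Cone_def)
next
  case False
  then have "Cone n = sigma (Cone (n - 1))"
    using Cone_Suc[of "n - 1"] by simp
  then show ?thesis
    using set_sigma by simp
qed

lemma Cone_Suc_Suc: "0 < n \<Longrightarrow> Cone (n + 2) = Cone (n + 1) @ Cone n"
proof (induction n rule: nat_induct_non_zero)
  case 1
  then show ?case by (simp add: Cone_def numeral_3_eq_3 numeral_2_eq_2)
next
  case (Suc n)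
  then show ?case by (simp add: Cone_Suc)
qed

lemma length_Cone: "0 < n \<Longrightarrow> length (Cone n) = fib n"
proof (induction n rule: fib.induct)
  case (3 n)
  show ?case
  proof (cases n)
    case 0
    then show ?thesis by (simp add: Cone_def numeral_2_eq_2)
  next
    case (Suc m)
    then show ?thesis
      using 3 Cone_Suc_Suc[of n] by simp
  qed
qed (simp_all add: Cone_def)

lemma sum_list_Cone: "0 < n \<Longrightarrow> sum_list (Cone n) = fib (Suc n)"
  using length_Cone[of "Suc n"] set_Cone[of n] by (simp add: Cone_Suc length_sigma)

lemma wythoff_prefix_sums_Cone: "2 \<le> n \<Longrightarrow> wythoff_prefix_sums (Cone n)"
proof (induction n rule: dec_induct)
  case base
  have "wythoff 1 = 1"
    using of_nat_wythoff[of 1] one_less_phi phi_less_2 floor_unique[of 1 phi] by simp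
  moreover from this have "wythoff 2 = 3"
    using wythoff_Suc_wythoff[of 1] by (simp add: numeral_2_eq_2 numeral_3_eq_3)
  ultimately show ?case
    by (auto simp: wythoff_prefix_sums_def Cone_def numeral_2_eq_2 le_Suc_eq)
next
  case (step n)
  then show ?case
    using wythoff_prefix_sums_sigma[OF set_Cone] by (simp add: Cone_Suc)
qed

lemma sum_list_take_Cone:
  assumes "0 < n" and "t \<le> fib n"
  shows "sum_list (take t (Cone n)) + wythoff (fib (n + 1) + 1) = wythoff (fib (n + 1) + 1 + t)"
proof -
  have sums: "wythoff_prefix_sums (Cone (n + 1) @ Cone n)"
    using wythoff_prefix_sums_Cone[of "n + 2"] Cone_Suc_Suc[OF assms(1)] by simp
  have len: "length (Cone (n + 1)) = fib (n + 1)" "length (Cone n) = fib n"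
    using assms(1) length_Cone by auto
  have "sum_list (Cone (n + 1)) + 1 = wythoff (fib (n + 1) + 1)"
    using sums[unfolded wythoff_prefix_sums_def, rule_format, of "fib (n + 1)"] len by simp
  moreover have "sum_list (Cone (n + 1)) + sum_list (take t (Cone n)) + 1 = wythoff (fib (n + 1) + 1 + t)"
    using sums[unfolded wythoff_prefix_sums_def, rule_format, of "fib (n + 1) + t"] len assms(2)
    by (simp add: ac_simps)
  ultimately show ?thesis
    by linarith
qed

lemma take_concat_replicate:
  assumes "h < m" and "t \<le> length xs"
  shows "take (h * length xs + t) (concat (replicate m xs)) = concat (replicate h xs) @ take t xs"
  using assms(1)
proof (induction h arbitrary: m)
  case 0
  then obtain m' where "m = Suc m'"
    using less_imp_Suc_add by blast
  then show ?case
    using assms(2) by simp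
next
  case (Suc h)
  then obtain m' where "m = Suc m'" and "h < m'"
    using Suc_less_eq2 by blast
  then show ?case
    using Suc.IH by (simp add: add.assoc)
qed

lemma sum_list_concat_replicate: "sum_list (concat (replicate m xs)) = m * sum_list xs"
  by (induction m) simp_all

lemma length_Cblk: "0 < n \<Longrightarrow> length (Cblk n) = 5 * fib n"
  by (simp add: Cblk_def length_concat sum_list_replicate length_Cone)

lemma sum_list_Cblk: "0 < n \<Longrightarrow> sum_list (Cblk n) = 5 * fib (Suc n)"
  by (simp add: Cblk_def sum_list_concat_replicate sum_list_Cone)

definition Cprefix :: "nat \<Rightarrow> nat list" where
  "Cprefix k = concat (map Cblk [1..<k + 1])"

lemma Cprefix_0 [simp]: "Cprefix 0 = []"
  by (simp add: Cprefix_def)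

lemma Cprefix_Suc [simp]: "Cprefix (Suc k) = Cprefix k @ Cblk (Suc k)"
  by (simp add: Cprefix_def)

lemma length_Cprefix: "length (Cprefix k) + 5 = 5 * fib (k + 2)"
  by (induction k) (simp_all add: length_Cblk)

lemma sum_list_Cprefix: "sum_list (Cprefix k) + 10 = 5 * fib (k + 3)"
  by (induction k) (simp_all add: sum_list_Cblk numeral_3_eq_3)

lemma length_Cprefix_ge: "k \<le> length (Cprefix k)"
proof (induction k)
  case (Suc k)
  then show ?case
    using fib_neq_0_nat[of "Suc k"] by (simp add: length_Cblk)
qed simp

lemma nth_Cprefix_mono:
  assumes "k \<le> m" and "i < length (Cprefix k)"
  shows "Cprefix m ! i = Cprefix k ! i"
proof -
  have "\<exists>ys. Cprefix m = Cprefix k @ ys"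
    using assms(1) by (induction m rule: dec_induct) auto
  then show ?thesis
    using assms(2) by (auto simp: nth_append)
qed

lemma nth_Cprefix:
  assumes "i < length (Cprefix k)" and "i < length (Cprefix m)"
  shows "Cprefix k ! i = Cprefix m ! i"
  using assms nth_Cprefix_mono nat_le_linear by metis

lemma sum_cseq_eq_sum_list_take:
  assumes "M \<le> length (Cprefix k)"
  shows "(\<Sum>i\<in>{1..<M + 1}. cseq i) = sum_list (take M (Cprefix k))"
proof -
  have cseq_Suc: "cseq (Suc i) = take M (Cprefix k) ! i" if "i < M" for i
    using nth_Cprefix[of i "Suc i" k] length_Cprefix_ge[of "Suc i"] that assms
    by (simp add: cseq_def Cprefix_def)
  have "(\<Sum>i\<in>{1..<M + 1}. cseq i) = (\<Sum>i = 0..<M. cseq (Suc i))"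
    by (metis One_nat_def Suc_eq_plus1 sum.shift_bounds_Suc_ivl)
  also have "\<dots> = (\<Sum>i = 0..<M. take M (Cprefix k) ! i)"
    using cseq_Suc by (intro sum.cong) auto
  also have "\<dots> = sum_list (take M (Cprefix k))"
    using assms by (simp add: sum_list_sum_nth min_absorb1)
  finally show ?thesis .
qed

lemma sum_list_take_Cprefix:
  assumes "0 < n" and "h < 5" and "t \<le> fib n"
  shows "sum_list (take (length (Cprefix (n - 1)) + h * fib n + t) (Cprefix n))
           = sum_list (Cprefix (n - 1)) + h * fib (n + 1) + sum_list (take t (Cone n))"
proof -
  have "Cprefix n = Cprefix (n - 1) @ Cblk n"
    using assms(1) Cprefix_Suc[of "n - 1"] by simp
  moreover have "take (h * fib n + t) (Cblk n) = concat (replicate h (Cone n)) @ take t (Cone n)"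
    using take_concat_replicate[of h 5 t "Cone n"] assms by (simp add: Cblk_def length_Cone)
  ultimately show ?thesis
    using assms(1) by (simp add: add.assoc sum_list_concat_replicate sum_list_Cone)
qed

lemma aseq_in_Cblk:
  assumes "0 < n" and "h < 5" and "t \<le> fib n"
  shows "aseq (5 * (fib (n + 1) - 1) + h * fib n + t + 1)
           = 5 * int (fib (n + 2)) - 4 + int h * int (fib (n + 1))
             + int (wythoff (fib (n + 1) + 1 + t)) - int (wythoff (fib (n + 1) + 1))"
proof -
  define M where "M = 5 * (fib (n + 1) - 1) + h * fib n + t"
  have len: "length (Cprefix (n - 1)) = 5 * (fib (n + 1) - 1)"
    using length_Cprefix[of "n - 1"] assms(1) by simp
  have "length (Cprefix n) = 5 * (fib (n + 1) - 1) + 5 * fib n"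
    using len assms(1) Cprefix_Suc[of "n - 1"] length_Cblk[of n] by simp
  moreover have "h * fib n \<le> 4 * fib n"
    using assms(2) by simp
  ultimately have "M \<le> length (Cprefix n)"
    using assms(3) unfolding M_def by linarith
  then have "(\<Sum>i\<in>{1..<M + 1}. cseq i) = sum_list (take M (Cprefix n))"
    by (rule sum_cseq_eq_sum_list_take)
  also have "\<dots> = sum_list (Cprefix (n - 1)) + h * fib (n + 1) + sum_list (take t (Cone n))"
    using sum_list_take_Cprefix[OF assms] by (simp only: M_def len)
  finally have "aseq (M + 1) = 6 + int (sum_list (Cprefix (n - 1))) + int h * int (fib (n + 1))
                                + int (sum_list (take t (Cone n)))"
    by (simp add: aseq_def flip: of_nat_sum)
  moreover have "sum_list (Cprefix (n - 1)) + 10 = 5 * fib (n + 2)"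
    using sum_list_Cprefix[of "n - 1"] assms(1) by simp
  moreover have "sum_list (take t (Cone n)) + wythoff (fib (n + 1) + 1) = wythoff (fib (n + 1) + 1 + t)"
    using sum_list_take_Cone assms by blast
  ultimately show ?thesis
    unfolding M_def by linarith
qed

lemma bseq_eq_aseq: "0 < n \<Longrightarrow> bseq n = aseq n + int n + 5"
  by (simp add: bseq_def aseq_def dseq_def sum.distrib)

theorem theorem4p4:
  fixes n h t :: nat
  assumes "n \<ge> 1" and "h \<le> 4" and "1 \<le> t" and "t \<le> fib n"
  shows "(aseq (5 * (fib (n + 1) - 1) + h * fib n + t + 1)
           = 5 * int (fib (n + 2)) - 4 + int h * int (fib (n + 1))
             + \<lfloor>real (fib (n + 1) + 1 + t) * phi\<rfloor> - \<lfloor>real (fib (n + 1) + 1) * phi\<rfloor>)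
         \<and> (bseq (5 * (fib (n + 1) - 1) + h * fib n + t + 1)
           = 5 * int (fib (n + 3)) + int h * int (fib (n + 2)) - 3 + int t
             + \<lfloor>real (fib (n + 1) + 1 + t) * phi\<rfloor> - \<lfloor>real (fib (n + 1) + 1) * phi\<rfloor>)"
proof -
  define N where "N = 5 * (fib (n + 1) - 1) + h * fib n + t + 1"
  have aseq_N: "aseq N = 5 * int (fib (n + 2)) - 4 + int h * int (fib (n + 1))
                         + int (wythoff (fib (n + 1) + 1 + t)) - int (wythoff (fib (n + 1) + 1))"
    using aseq_in_Cblk[of n h t] assms by (simp add: N_def)
  have "int N = 5 * int (fib (n + 1)) + int h * int (fib n) + int t - 4"
    using fib_neq_0_nat[of "n + 1"] by (simp add: N_def of_nat_diff)
  moreover have "int (fib (n + 3)) = int (fib (n + 2)) + int (fib (n + 1))"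
    and "int h * int (fib (n + 2)) = int h * int (fib (n + 1)) + int h * int (fib n)"
    by (simp_all add: numeral_3_eq_3 numeral_2_eq_2 algebra_simps)
  ultimately have "bseq N = 5 * int (fib (n + 3)) + int h * int (fib (n + 2)) - 3 + int t
                            + int (wythoff (fib (n + 1) + 1 + t)) - int (wythoff (fib (n + 1) + 1))"
    using bseq_eq_aseq[of N] aseq_N by (simp add: N_def)
  with aseq_N show ?thesis
    unfolding N_def of_nat_wythoff by simp
qed

end
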